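(* Let $D=(E,\mathcal{F})$ be a normal binary delta-matroid. Then the twist polynomial ${}^{\partial}w_{D}(z)$ has a non-zero constant term (i.e. $w(D*A)=0$ for some $A\subseteq E$) if and only if the intersection graph $G_D$ is a bipartite graph (in particular has no loops).
   Context: A delta-matroid is a set system $(E,\mathcal{F})$, $\mathcal{F}\ne\emptyset$ a family of subsets of finite $E$, satisfying: for all $X,Y\in\mathcal{F}$ and $u\in X\Delta Y$ there is $v\in X\Delta Y$ with $X\Delta\{u,v\}\in\mathcal{F}$. Twist: $D*A=(E,\{A\Delta X:X\in\mathcal{F}\})$. Width $w(D)$ = maximum minus minimum cardinality of feasible sets; twist polynomial ${}^{\partial}w_{D}(z)=\sum_{A\subseteq E}z^{w(D*A)}$. $D$ is normal if $\emptyset\in\mathcal{F}$. For a symmetric matrix $C$ over $GF(2)$ indexed by $E$, $D(C)=(E,\{A\subseteq E: C[A]\text{ nonsingular}\})$ ($C[A]$ principal submatrix, $C[\emptyset]$ nonsingular by convention). $D$ is binary if some twist of it is isomorphic to some $D(C)$. A normal binary $D$ equals $D(C)$ for a unique symmetric $C$; its intersection graph $G_D$ has vertex set $E$, distinct $u,v$ adjacent iff $C_{u,v}=1$, and a loop at $v$ iff $C_{v,v}=1$. *)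

theory Defs
  imports "HOL-Library.Z2" "HOL-Combinatorics.Permutations" "HOL-Computational_Algebra.Polynomial"
begin

definition symdiff :: "'a set \<Rightarrow> 'a set \<Rightarrow> 'a set" where
  "symdiff X Y = (X - Y) \<union> (Y - X)"

definition delta_matroid :: "'a set \<Rightarrow> 'a set set \<Rightarrow> bool" where
  "delta_matroid E F \<longleftrightarrow> finite E \<and> F \<noteq> {} \<and> (\<forall>X\<in>F. X \<subseteq> E) \<and>
     (\<forall>X\<in>F. \<forall>Y\<in>F. \<forall>u\<in>symdiff X Y.
        \<exists>v\<in>symdiff X Y. symdiff X {u,v} \<in> F)"

definition twist :: "'a set set \<Rightarrow> 'a set \<Rightarrow> 'a set set" where
  "twist F A = (\<lambda>X. symdiff A X) ` F"

definition width :: "'a set set \<Rightarrow> nat" where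
  "width F = Max (card ` F) - Min (card ` F)"

definition twist_poly :: "'a set \<Rightarrow> 'a set set \<Rightarrow> int poly" where
  "twist_poly E F = (\<Sum>A\<in>Pow E. monom 1 (width (twist F A)))"

definition normal :: "'a set set \<Rightarrow> bool" where
  "normal F \<longleftrightarrow> {} \<in> F"

definition det_sub :: "('a \<Rightarrow> 'a \<Rightarrow> bit) \<Rightarrow> 'a set \<Rightarrow> bit" where
  "det_sub C A = (\<Sum>p\<in>{p. p permutes A}. of_int (sign p) * (\<Prod>i\<in>A. C i (p i)))"

definition symmetric_mat :: "('a \<Rightarrow> 'a \<Rightarrow> bit) \<Rightarrow> bool" where
  "symmetric_mat C \<longleftrightarrow> (\<forall>u v. C u v = C v u)"

definition dm_of_mat :: "'a set \<Rightarrow> ('a \<Rightarrow> 'a \<Rightarrow> bit) \<Rightarrow> 'a set set" where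
  "dm_of_mat E C = {A. A \<subseteq> E \<and> det_sub C A \<noteq> 0}"

definition binary :: "'a set \<Rightarrow> 'a set set \<Rightarrow> bool" where
  "binary E F \<longleftrightarrow> (\<exists>A\<subseteq>E. \<exists>(f::'a \<Rightarrow> 'a) E' C. bij_betw f E E' \<and> symmetric_mat C \<and>
       (\<lambda>X. f ` X) ` twist F A = dm_of_mat E' C)"

definition inter_mat :: "'a set \<Rightarrow> 'a set set \<Rightarrow> ('a \<Rightarrow> 'a \<Rightarrow> bit)" where
  "inter_mat E F = (THE C. symmetric_mat C \<and> (\<forall>u v. C u v \<noteq> 0 \<longrightarrow> u \<in> E \<and> v \<in> E)
                         \<and> F = dm_of_mat E C)"

definition inter_graph_adj :: "'a set \<Rightarrow> 'a set set \<Rightarrow> 'a \<Rightarrow> 'a \<Rightarrow> bool" where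
  "inter_graph_adj E F u v \<longleftrightarrow> u \<in> E \<and> v \<in> E \<and> inter_mat E F u v = 1"

(* bipartite graph (on vertex set V, adjacency possibly with loops):
   V splits into two sides with every edge (incl. loops) joining different sides;
   in particular a bipartite graph has no loops *)
definition bipartite :: "'a set \<Rightarrow> ('a \<Rightarrow> 'a \<Rightarrow> bool) \<Rightarrow> bool" where
  "bipartite V adj \<longleftrightarrow> (\<exists>X\<subseteq>V. \<forall>u\<in>V. \<forall>v\<in>V. adj u v \<longrightarrow> (u \<in> X \<longleftrightarrow> v \<notin> X))"

end

theory Submission
  imports Defs "Jordan_Normal_Form.Determinant"
begin

(* A normal binary delta-matroid is D(C) for a symmetric C over GF(2): some twist D*A0 is D(C0) up
   to relabelling, A0 is feasible there because D is normal, and pivoting C0 on the nonsingular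
   block C0[A0] (Tucker) gives a symmetric C' with D(C') = D(C0)*A0 = D.

   Since D*A contains A (the twist of the empty set), D*A has width 0 iff |A \<Delta> X| = |A|, i.e.
   |X| = 2|A \<inter> X|, for every feasible X. If this holds, the feasible singletons {v} (loops) are
   excluded, hence every edge uv gives a feasible pair {u,v}, which must meet A exactly once: A is
   one side of a bipartition. Conversely, if X is one side of a bipartition and C[Y] is nonsingular,
   some permutation p of Y has all C y (p y) = 1, so p maps Y \<inter> X into Y - X and vice versa, whence
   |Y| = 2|X \<inter> Y|. *)

section \<open>Principal minors over GF(2)\<close>

lemma of_int_sign_bit [simp]: "(of_int (sign p) :: bit) = 1"
  unfolding sign_def by simp

lemma det_sub_eq_sum_prod: "det_sub C A = (\<Sum>p\<in>{p. p permutes A}. \<Prod>i\<in>A. C i (p i))"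
  unfolding det_sub_def by (simp only: of_int_sign_bit mult_1)

lemma det_sub_singleton [simp]: "det_sub C {v} = C v v"
  by (simp add: det_sub_eq_sum_prod)

lemma permutes_doubleton:
  assumes "u \<noteq> v"
  shows "{p. p permutes {u,v}} = {id, Transposition.transpose u v}"
proof (rule equalityI; rule subsetI)
  fix p assume "p \<in> {p. p permutes {u,v}}"
  hence p: "p permutes {u,v}" by simp
  have pu: "p u \<in> {u,v}" "p v \<in> {u,v}" using permutes_in_image[OF p] by auto
  have inj: "p u \<noteq> p v" using permutes_inj[OF p] assms by (meson injD)
  have out: "\<And>x. x \<notin> {u,v} \<Longrightarrow> p x = x" using permutes_not_in[OF p] by auto
  show "p \<in> {id, Transposition.transpose u v}"
  proof (cases "p u = u")
    case True
    hence "p v = v" using pu inj by auto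
    hence "p = id" using True out by (intro ext) (metis id_apply insertE empty_iff)
    thus ?thesis by simp
  next
    case False
    hence "p u = v" "p v = u" using pu inj by auto
    hence "p = Transposition.transpose u v" using out
      by (auto simp: fun_eq_iff transpose_def)
    thus ?thesis by simp
  qed
qed (auto simp: permutes_swap_id)

lemma det_sub_doubleton:
  assumes "u \<noteq> v"
  shows "det_sub C {u,v} = C u u * C v v + C u v * C v u"
proof -
  have "id \<noteq> Transposition.transpose u v"
    using assms by (metis id_apply transpose_apply_first)
  hence "det_sub C {u,v}
      = (\<Prod>i\<in>{u,v}. C i (id i)) + (\<Prod>i\<in>{u,v}. C i (Transposition.transpose u v i))"
    unfolding det_sub_eq_sum_prod permutes_doubleton[OF assms]
    by (subst sum.insert)
      (simp_all only: sum.insert finite.intros empty_iff singleton_iff sum.empty add_0_right simp_thms)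
  also have "\<dots> = C u u * C v v + C u v * C v u"
    using assms by (simp only: prod.insert finite.intros singleton_iff insert_iff empty_iff prod.empty
        mult_1_right id_apply transpose_apply_first transpose_apply_second simp_thms)
  finally show ?thesis .
qed

lemma bit_cases: "(x::bit) = 0 \<or> x = 1"
  by (cases x) auto

lemma det_sub_doubleton_symmetric:
  assumes "symmetric_mat C" "u \<noteq> v"
  shows "det_sub C {u,v} = C u u * C v v + C u v"
proof -
  have "C v u = C u v" using assms(1) unfolding symmetric_mat_def by simp
  moreover have "C u v * C u v = C u v" using bit_cases[of "C u v"] by auto
  ultimately show ?thesis using det_sub_doubleton[OF assms(2), of C] by (simp only:)
qed

lemma det_sub_reindex:
  assumes f: "bij_betw f A B"
  shows "det_sub C B = det_sub (\<lambda>i j. C (f i) (f j)) A"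
proof -
  let ?f = "\<lambda>\<pi> x. if x \<in> B then f (\<pi> (inv_into A f x)) else x"
  have "det_sub C B = (\<Sum>\<pi>\<in>{\<pi>. \<pi> permutes A}. \<Prod>i\<in>B. C i (?f \<pi> i))"
    unfolding det_sub_eq_sum_prod
    by (rule sum.reindex_bij_betw[OF bij_betw_permutations[OF f], symmetric])
  also have "\<dots> = (\<Sum>\<pi>\<in>{\<pi>. \<pi> permutes A}. \<Prod>a\<in>A. C (f a) (f (\<pi> a)))"
  proof (rule sum.cong[OF refl])
    fix \<pi> assume "\<pi> \<in> {\<pi>. \<pi> permutes A}"
    have "(\<Prod>i\<in>B. C i (?f \<pi> i)) = (\<Prod>a\<in>A. C (f a) (?f \<pi> (f a)))"
      by (rule prod.reindex_bij_betw[OF f, symmetric])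
    also have "\<dots> = (\<Prod>a\<in>A. C (f a) (f (\<pi> a)))"
      using f by (intro prod.cong refl) (auto simp: bij_betw_def bij_betw_inv_into_left)
    finally show "(\<Prod>i\<in>B. C i (?f \<pi> i)) = (\<Prod>a\<in>A. C (f a) (f (\<pi> a)))" .
  qed
  finally show ?thesis unfolding det_sub_eq_sum_prod .
qed

lemma det_sub_cong:
  assumes "\<And>i j. i \<in> A \<Longrightarrow> j \<in> A \<Longrightarrow> C i j = C' i j"
  shows "det_sub C A = det_sub C' A"
  unfolding det_sub_eq_sum_prod
  by (intro sum.cong prod.cong refl assms) (auto simp: permutes_in_image)

lemma det_sub_pad_identity:
  assumes S: "finite S" and Y: "Y \<subseteq> S"
  shows "det_sub (\<lambda>i j. if j \<in> Y then C i j else (if i = j then 1 else 0)) S = det_sub C Y"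
proof -
  let ?D = "\<lambda>i j. if j \<in> Y then C i j else (if i = j then 1 else 0)"
  have sub: "{p. p permutes Y} \<subseteq> {p. p permutes S}" using permutes_subset Y by blast
  have zero: "(\<Prod>i\<in>S. ?D i (p i)) = 0" if p: "p \<in> {p. p permutes S} - {p. p permutes Y}" for p
  proof -
    have pS: "p permutes S" and npY: "\<not> p permutes Y" using p by auto
    have "\<exists>i\<in>S. p i \<notin> Y \<and> p i \<noteq> i"
    proof (rule ccontr)
      assume "\<not> ?thesis"
      hence fix_out: "\<And>i. i \<in> S \<Longrightarrow> p i \<notin> Y \<Longrightarrow> p i = i" by blast
      have "p x = x" if "x \<notin> Y" for x
      proof (cases "x \<in> S")
        case True
        then obtain i where "i \<in> S" "p i = x"
          using permutes_image[OF pS] by (metis imageE)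
        thus ?thesis using fix_out[of i] that by simp
      qed (use permutes_not_in[OF pS] in auto)
      hence "p permutes Y" using pS unfolding permutes_def by blast
      thus False using npY by simp
    qed
    then obtain i where i: "i \<in> S" "p i \<notin> Y" "p i \<noteq> i" by blast
    hence "?D i (p i) = 0" by simp
    thus ?thesis by (intro prod_zero[OF S]) (use i in blast)
  qed
  have one: "(\<Prod>i\<in>S. ?D i (p i)) = (\<Prod>i\<in>Y. C i (p i))" if p: "p permutes Y" for p
  proof -
    have "(\<Prod>i\<in>S. ?D i (p i)) = (\<Prod>i\<in>Y. ?D i (p i))"
      using S Y permutes_not_in[OF p] by (intro prod.mono_neutral_right) auto
    also have "\<dots> = (\<Prod>i\<in>Y. C i (p i))"
      using permutes_in_image[OF p] by (intro prod.cong) auto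
    finally show ?thesis .
  qed
  have "det_sub ?D S = (\<Sum>p\<in>{p. p permutes Y}. \<Prod>i\<in>S. ?D i (p i))"
    unfolding det_sub_eq_sum_prod
    by (rule sum.mono_neutral_right[OF finite_permutations[OF S] sub]) (use zero in blast)
  also have "\<dots> = det_sub C Y" unfolding det_sub_eq_sum_prod using one by simp
  finally show ?thesis .
qed

lemma card_Int_eq_card_Diff_if_det_sub_neq_0:
  assumes fin: "finite Y" and det: "det_sub C Y \<noteq> 0"
    and bip: "\<And>u v. u \<in> Y \<Longrightarrow> v \<in> Y \<Longrightarrow> C u v \<noteq> 0 \<Longrightarrow> u \<in> X \<longleftrightarrow> v \<notin> X"
  shows "card (Y \<inter> X) = card (Y - X)"
proof -
  have "(\<Sum>p\<in>{p. p permutes Y}. \<Prod>i\<in>Y. C i (p i)) \<noteq> 0"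
    using det unfolding det_sub_eq_sum_prod .
  then obtain p where "p \<in> {p. p permutes Y}" and pr: "(\<Prod>i\<in>Y. C i (p i)) \<noteq> 0"
    by (meson sum.neutral)
  hence p: "p permutes Y" by simp
  have nz: "C i (p i) \<noteq> 0" if "i \<in> Y" for i
  proof
    assume "C i (p i) = 0"
    hence "(\<Prod>i\<in>Y. C i (p i)) = 0" by (intro prod_zero[OF fin]) (use that in blast)
    thus False using pr by simp
  qed
  have inj: "inj_on p S" for S using permutes_inj[OF p] by (rule inj_on_subset) simp
  have pY: "p i \<in> Y" if "i \<in> Y" for i using permutes_in_image[OF p] that by simp
  have "card (Y \<inter> X) \<le> card (Y - X)"
    by (rule card_inj_on_le[OF inj]) (use fin bip nz pY in auto)
  moreover have "card (Y - X) \<le> card (Y \<inter> X)"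
    by (rule card_inj_on_le[OF inj]) (use fin bip nz pY in auto)
  ultimately show ?thesis by simp
qed

section \<open>Pivoting\<close>

definition padded_mat :: "nat \<Rightarrow> (nat \<Rightarrow> nat \<Rightarrow> 'b::zero_neq_one) \<Rightarrow> nat set \<Rightarrow> 'b mat" where
  "padded_mat n c Y = mat n n (\<lambda>(i,j). if j \<in> Y then c i j else (if i = j then 1 else 0))"

lemma padded_mat_carrier [simp]: "padded_mat n c Y \<in> carrier_mat n n"
  and padded_mat_dims [simp]: "dim_row (padded_mat n c Y) = n" "dim_col (padded_mat n c Y) = n"
  unfolding padded_mat_def by simp_all

lemma padded_mat_index:
  "i < n \<Longrightarrow> j < n \<Longrightarrow>
     padded_mat n c Y $$ (i,j) = (if j \<in> Y then c i j else (if i = j then 1 else 0))"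
  unfolding padded_mat_def by simp

lemma det_mat_eq_det_sub: "det (mat n n (\<lambda>(i,j). c i j)) = det_sub c {0..<n}"
  unfolding det_def det_sub_eq_sum_prod
  by (auto intro!: sum.cong prod.cong simp: permutes_in_image)

lemma det_padded_mat:
  assumes "Y \<subseteq> {0..<n}"
  shows "det (padded_mat n c Y) = det_sub c Y"
  unfolding padded_mat_def det_mat_eq_det_sub using assms by (intro det_sub_pad_identity) auto

lemma padded_mat_mult_transpose_index:
  fixes c :: "nat \<Rightarrow> nat \<Rightarrow> 'b::comm_ring_1"
  assumes i: "i < n" and k: "k < n"
  shows "(padded_mat n c A * transpose_mat (padded_mat n c ({0..<n} - A))) $$ (i,k)
     = (if k \<in> A then c i k else 0) + (if i \<notin> A then c k i else 0)"
proof -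
  let ?N = "padded_mat n c A" and ?V = "padded_mat n c ({0..<n} - A)"
  have "(?N * transpose_mat ?V) $$ (i,k) = (\<Sum>j\<in>{0..<n}. ?N $$ (i,j) * ?V $$ (k,j))"
    using i k by (simp add: scalar_prod_def)
  also have "\<dots> = (\<Sum>j\<in>{0..<n}. (if j = k then (if k \<in> A then c i k else 0) else 0)
        + (if j = i then (if i \<notin> A then c k i else 0) else 0))"
    using i k by (intro sum.cong refl) (auto simp: padded_mat_index)
  also have "\<dots> = (if k \<in> A then c i k else 0) + (if i \<notin> A then c k i else 0)"
    unfolding sum.distrib using i k by (simp only: sum.delta finite_atLeastLessThan atLeastLessThan_iff
        zero_le simp_thms if_True)
  finally show ?thesis .
qed

(* For i \<in> A and k \<notin> A the entries (i,k) and (k,i) are 0 and c k i + c i k: symmetry needs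
   characteristic 2. *)
lemma padded_mat_mult_transpose_symmetric:
  fixes c :: "nat \<Rightarrow> nat \<Rightarrow> bit" and n :: nat and A :: "nat set"
  assumes sym: "\<And>i j. c i j = c j i"
  defines "P \<equiv> padded_mat n c A * transpose_mat (padded_mat n c ({0..<n} - A))"
  shows "transpose_mat P = P"
proof (rule eq_matI)
  fix i k assume "i < dim_row P" "k < dim_col P"
  hence ik: "i < n" "k < n" by (auto simp: P_def)
  have "P $$ (k,i) = P $$ (i,k)"
    unfolding P_def padded_mat_mult_transpose_index[OF ik] padded_mat_mult_transpose_index[OF ik(2,1)]
    using sym[of i k] by (cases "i \<in> A"; cases "k \<in> A") auto
  thus "transpose_mat P $$ (i, k) = P $$ (i, k)" using ik by (simp add: P_def)
qed (auto simp: P_def)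

lemma transpose_left_inverse_mult_symmetric:
  fixes N N' V :: "'b::comm_ring_1 mat"
  assumes N: "N \<in> carrier_mat n n" and N': "N' \<in> carrier_mat n n" and V: "V \<in> carrier_mat n n"
    and inv: "N' * N = 1\<^sub>m n"
    and sym: "transpose_mat (N * transpose_mat V) = N * transpose_mat V"
  shows "transpose_mat (N' * V) = N' * V"
proof -
  have "transpose_mat (N' * V) = (N' * N) * transpose_mat V * transpose_mat N'"
    using transpose_mult[OF N' V] inv V by simp
  also have "\<dots> = N' * (N * transpose_mat V) * transpose_mat N'"
    using N' N V by (simp add: assoc_mult_mat[of _ n n])
  also have "\<dots> = N' * (V * transpose_mat N) * transpose_mat N'"
    using sym N V by (simp add: transpose_mult[of _ n n])
  also have "\<dots> = N' * V * transpose_mat N * transpose_mat N'"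
    using N' N V by (subst assoc_mult_mat[of N' n n V n "transpose_mat N" n]) auto
  also have "\<dots> = N' * V * (transpose_mat N * transpose_mat N')"
    using N' N V by (subst assoc_mult_mat[of "N' * V" n n "transpose_mat N" n "transpose_mat N'" n]) auto
  also have "transpose_mat N * transpose_mat N' = 1\<^sub>m n"
    using transpose_mult[OF N' N] inv by simp
  finally show ?thesis using N' V by simp
qed

lemma left_inverse_mult_padded_mat_symdiff:
  fixes c c' :: "nat \<Rightarrow> nat \<Rightarrow> 'b::comm_ring_1"
  assumes N': "N' \<in> carrier_mat n n" and inv: "N' * padded_mat n c A = 1\<^sub>m n"
    and Y: "Y \<subseteq> {0..<n}"
    and c': "\<And>i j. i < n \<Longrightarrow> j < n \<Longrightarrow> c' i j = (N' * padded_mat n c ({0..<n} - A)) $$ (i,j)"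
  shows "N' * padded_mat n c (symdiff Y A) = padded_mat n c' Y"
proof (rule eq_matI)
  let ?N = "padded_mat n c A" and ?V = "padded_mat n c ({0..<n} - A)"
  fix i j assume "i < dim_row (padded_mat n c' Y)" "j < dim_col (padded_mat n c' Y)"
  hence ij: "i < n" "j < n" by auto
  have "col (padded_mat n c (symdiff Y A)) j = (if j \<in> Y then col ?V j else col ?N j)"
    using ij Y by (intro eq_vecI) (auto simp: padded_mat_index symdiff_def)
  hence "(N' * padded_mat n c (symdiff Y A)) $$ (i,j) = (if j \<in> Y then (N' * ?V) $$ (i,j) else (N' * ?N) $$ (i,j))"
    using ij N' by simp
  thus "(N' * padded_mat n c (symdiff Y A)) $$ (i,j) = padded_mat n c' Y $$ (i,j)"
    using ij inv c' by (simp add: padded_mat_index)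
qed (use N' in auto)

(* Tucker's pivot: with N = padded_mat n c A and V = padded_mat n c ({0..<n} - A), the matrix
   N\<inverse> V is symmetric, and N\<inverse> padded_mat n c (Y \<Delta> A) = padded_mat n (N\<inverse> V) Y column by column. *)
lemma symmetric_pivot_nat:
  fixes c :: "nat \<Rightarrow> nat \<Rightarrow> bit"
  assumes sym: "\<And>i j. c i j = c j i" and A: "A \<subseteq> {0..<n}" and det: "det_sub c A \<noteq> 0"
  obtains c' where "\<And>i j. c' i j = c' j i"
    and "\<And>Y. Y \<subseteq> {0..<n} \<Longrightarrow> det_sub c' Y \<noteq> 0 \<longleftrightarrow> det_sub c (symdiff Y A) \<noteq> 0"
proof -
  define N where "N = padded_mat n c A"
  define V where "V = padded_mat n c ({0..<n} - A)"
  have N: "N \<in> carrier_mat n n" and V: "V \<in> carrier_mat n n" unfolding N_def V_def by auto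
  have "det N \<noteq> 0" unfolding N_def using det_padded_mat[OF A] det by simp
  from det_non_zero_imp_unit[OF N this, of "()"]
  obtain N' where N': "N' \<in> carrier_mat n n" and inv: "N' * N = 1\<^sub>m n"
    unfolding Units_def ring_mat_def by auto
  have det_N': "det N' \<noteq> 0" using det_mult[OF N' N] inv by auto
  define M where "M = N' * V"
  have M: "M \<in> carrier_mat n n" unfolding M_def using N' V by simp
  have "transpose_mat M = M"
    unfolding M_def using transpose_left_inverse_mult_symmetric[OF N N' V inv]
      padded_mat_mult_transpose_symmetric[OF sym] by (simp add: N_def V_def)
  hence M_sym: "M $$ (i,j) = M $$ (j,i)" if "i < n" "j < n" for i j
    using that M by (metis carrier_matD index_transpose_mat(1))
  define c' where "c' = (\<lambda>i j. if i < n \<and> j < n then M $$ (i,j) else 0)"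
  have "det_sub c' Y \<noteq> 0 \<longleftrightarrow> det_sub c (symdiff Y A) \<noteq> 0" if Y: "Y \<subseteq> {0..<n}" for Y
  proof -
    have YA: "symdiff Y A \<subseteq> {0..<n}" using Y A by (auto simp: symdiff_def)
    have "padded_mat n c' Y = N' * padded_mat n c (symdiff Y A)"
      using inv Y by (intro left_inverse_mult_padded_mat_symdiff[OF N', symmetric])
        (auto simp: N_def V_def M_def c'_def)
    hence "det_sub c' Y = det N' * det_sub c (symdiff Y A)"
      by (simp add: det_padded_mat[OF Y, symmetric] det_mult[OF N'] det_padded_mat[OF YA])
    thus ?thesis using det_N' by simp
  qed
  moreover have "c' i j = c' j i" for i j using M_sym by (simp add: c'_def)
  ultimately show ?thesis using that by blast
qed

definition mat_supported_on :: "'a set \<Rightarrow> ('a \<Rightarrow> 'a \<Rightarrow> bit) \<Rightarrow> bool" where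
  "mat_supported_on E C \<longleftrightarrow> (\<forall>u v. C u v \<noteq> 0 \<longrightarrow> u \<in> E \<and> v \<in> E)"

lemma symmetric_pivot:
  fixes C :: "'a \<Rightarrow> 'a \<Rightarrow> bit"
  assumes fin: "finite E" and sym: "symmetric_mat C" and A: "A \<subseteq> E" and det: "det_sub C A \<noteq> 0"
  obtains C' where "symmetric_mat C'" "mat_supported_on E C'"
    and "\<And>Y. Y \<subseteq> E \<Longrightarrow> det_sub C' Y \<noteq> 0 \<longleftrightarrow> det_sub C (symdiff Y A) \<noteq> 0"
proof -
  obtain e where e: "bij_betw e {0..<card E} E" using ex_bij_betw_nat_finite[OF fin] by blast
  define n where "n = card E"
  have e: "bij_betw e {0..<n} E" using e n_def by simp
  define pre where "pre = (\<lambda>B. {i \<in> {0..<n}. e i \<in> B})"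
  have pre_bij: "bij_betw e (pre B) B" if "B \<subseteq> E" for B
  proof -
    have "bij_betw e (pre B) (e ` pre B)"
      by (rule bij_betw_subset[OF e]) (auto simp: pre_def)
    moreover have "e ` pre B = B" using that e unfolding pre_def bij_betw_def by force
    ultimately show ?thesis by simp
  qed
  define c where "c = (\<lambda>i j. C (e i) (e j))"
  have det_pre: "det_sub C B = det_sub c (pre B)" if "B \<subseteq> E" for B
    unfolding c_def by (rule det_sub_reindex[OF pre_bij[OF that]])
  have sym_c: "\<And>i j. c i j = c j i" using sym unfolding c_def symmetric_mat_def by simp
  obtain c' where sym_c': "\<And>i j. c' i j = c' j i"
    and piv: "\<And>Y. Y \<subseteq> {0..<n} \<Longrightarrow> det_sub c' Y \<noteq> 0 \<longleftrightarrow> det_sub c (symdiff Y (pre A)) \<noteq> 0"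
    by (rule symmetric_pivot_nat[of c "pre A" n, OF sym_c])
      (use det det_pre[OF A] in \<open>auto simp: pre_def\<close>)
  define C' where "C' = (\<lambda>u v. if u \<in> E \<and> v \<in> E then c' (inv_into {0..<n} e u) (inv_into {0..<n} e v) else 0)"
  have "det_sub C' Y \<noteq> 0 \<longleftrightarrow> det_sub C (symdiff Y A) \<noteq> 0" if Y: "Y \<subseteq> E" for Y
  proof -
    have "det_sub C' Y = det_sub (\<lambda>i j. C' (e i) (e j)) (pre Y)"
      by (rule det_sub_reindex[OF pre_bij[OF Y]])
    also have "\<dots> = det_sub c' (pre Y)"
      using e by (intro det_sub_cong) (auto simp: C'_def pre_def bij_betw_def inv_into_f_f)
    finally have "det_sub C' Y = det_sub c' (pre Y)" .
    moreover have "symdiff (pre Y) (pre A) = pre (symdiff Y A)" unfolding pre_def symdiff_def by auto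
    moreover have "det_sub C (symdiff Y A) = det_sub c (pre (symdiff Y A))"
      using Y A by (intro det_pre) (auto simp: symdiff_def)
    moreover have "pre Y \<subseteq> {0..<n}" by (auto simp: pre_def)
    ultimately show ?thesis using piv by simp
  qed
  moreover have "symmetric_mat C'" unfolding symmetric_mat_def C'_def using sym_c' by auto
  moreover have "mat_supported_on E C'" unfolding mat_supported_on_def C'_def by auto
  ultimately show ?thesis using that by blast
qed

section \<open>The matrix of a normal binary delta-matroid\<close>

lemma symdiff_symdiff [simp]: "symdiff A (symdiff A X) = X"
  unfolding symdiff_def by auto

lemma twist_twist [simp]: "twist (twist F A) A = F"
  unfolding twist_def by (simp add: image_image)

lemma dm_of_mat_pivot:
  assumes fin: "finite E" and sym: "symmetric_mat C" and A: "A \<in> dm_of_mat E C"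
  obtains C' where "symmetric_mat C'" "mat_supported_on E C'"
    and "dm_of_mat E C' = twist (dm_of_mat E C) A"
proof -
  have AE: "A \<subseteq> E" and det: "det_sub C A \<noteq> 0" using A unfolding dm_of_mat_def by auto
  obtain C' where C': "symmetric_mat C'" "mat_supported_on E C'"
    and piv: "\<And>Y. Y \<subseteq> E \<Longrightarrow> det_sub C' Y \<noteq> 0 \<longleftrightarrow> det_sub C (symdiff Y A) \<noteq> 0"
    using symmetric_pivot[OF fin sym AE det] by blast
  have "Y \<in> dm_of_mat E C' \<longleftrightarrow> Y \<in> twist (dm_of_mat E C) A" for Y
  proof -
    have "Y \<in> twist (dm_of_mat E C) A \<longleftrightarrow> symdiff A Y \<in> dm_of_mat E C"
      unfolding twist_def by (metis image_eqI imageE symdiff_symdiff)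
    also have "\<dots> \<longleftrightarrow> Y \<subseteq> E \<and> det_sub C (symdiff Y A) \<noteq> 0"
      using AE unfolding dm_of_mat_def symdiff_def by (auto simp: Un_commute)
    finally show ?thesis unfolding dm_of_mat_def using piv by auto
  qed
  thus ?thesis using that C' by blast
qed

lemma dm_of_mat_reindex:
  assumes f: "bij_betw f E E'" and T: "\<And>X. X \<in> T \<Longrightarrow> X \<subseteq> E"
    and img: "(\<lambda>X. f ` X) ` T = dm_of_mat E' C"
  shows "T = dm_of_mat E (\<lambda>u v. C (f u) (f v))"
proof -
  have inj: "inj_on f E" using f by (rule bij_betw_imp_inj_on)
  have det: "det_sub C (f ` X) = det_sub (\<lambda>u v. C (f u) (f v)) X" if "X \<subseteq> E" for X
    by (rule det_sub_reindex) (use inj that in \<open>auto simp: bij_betw_def intro: inj_on_subset\<close>)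
  have mem: "X \<in> T \<longleftrightarrow> f ` X \<in> dm_of_mat E' C" if X: "X \<subseteq> E" for X
  proof
    assume "f ` X \<in> dm_of_mat E' C"
    then obtain Z where Z: "Z \<in> T" "f ` Z = f ` X" using img by (metis imageE)
    hence "Z = X" using inj_on_image_eq_iff[OF inj T[OF Z(1)] X] by simp
    thus "X \<in> T" using Z by simp
  qed (use img in blast)
  have img_sub: "f ` X \<subseteq> E'" if "X \<subseteq> E" for X using that f by (auto simp: bij_betw_def)
  have "X \<in> T \<longleftrightarrow> X \<in> dm_of_mat E (\<lambda>u v. C (f u) (f v))" for X
  proof (cases "X \<subseteq> E")
    case True
    thus ?thesis using mem[OF True] img_sub[OF True] det[OF True] unfolding dm_of_mat_def by simp
  qed (use T in \<open>auto simp: dm_of_mat_def\<close>)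
  thus ?thesis by blast
qed

lemma normal_binary_eq_dm_of_mat:
  assumes dm: "delta_matroid E F" and "normal F" and "binary E F"
  obtains C where "symmetric_mat C" "mat_supported_on E C" "F = dm_of_mat E C"
proof -
  have fin: "finite E" and sub: "\<And>X. X \<in> F \<Longrightarrow> X \<subseteq> E"
    using dm unfolding delta_matroid_def by auto
  obtain A0 and f :: "'a \<Rightarrow> 'a" and E' C where A0: "A0 \<subseteq> E" and f: "bij_betw f E E'"
    and sym: "symmetric_mat C" and img: "(\<lambda>X. f ` X) ` twist F A0 = dm_of_mat E' C"
    using \<open>binary E F\<close> unfolding binary_def by (elim exE conjE) metis
  define C0 where "C0 = (\<lambda>u v. C (f u) (f v))"
  have sym0: "symmetric_mat C0" using sym unfolding C0_def symmetric_mat_def by simp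
  have T: "twist F A0 = dm_of_mat E C0"
    unfolding C0_def using A0 sub
    by (intro dm_of_mat_reindex[OF f _ img]) (auto simp: twist_def symdiff_def)
  have "symdiff A0 {} = A0" by (simp add: symdiff_def)
  hence "A0 \<in> twist F A0" using \<open>normal F\<close> unfolding normal_def twist_def by (metis image_eqI)
  hence "A0 \<in> dm_of_mat E C0" unfolding T .
  from dm_of_mat_pivot[OF fin sym0 this] obtain C' where
    "symmetric_mat C'" "mat_supported_on E C'" "dm_of_mat E C' = twist (twist F A0) A0"
    unfolding T .
  thus ?thesis using that by simp
qed

lemma dm_of_mat_inject:
  assumes sym1: "symmetric_mat C1" and sym2: "symmetric_mat C2"
    and supp1: "mat_supported_on E C1" and supp2: "mat_supported_on E C2"
    and eq: "dm_of_mat E C1 = dm_of_mat E C2"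
  shows "C1 = C2"
proof (intro ext)
  fix u v
  have det: "det_sub C1 Y \<noteq> 0 \<longleftrightarrow> det_sub C2 Y \<noteq> 0" if "Y \<subseteq> E" for Y
    using eq that unfolding dm_of_mat_def by blast
  have diag: "C1 w w = C2 w w" if "w \<in> E" for w
    using det[of "{w}"] that bit_cases[of "C1 w w"] bit_cases[of "C2 w w"] by auto
  show "C1 u v = C2 u v"
  proof (cases "u \<in> E \<and> v \<in> E")
    case False thus ?thesis using supp1 supp2 unfolding mat_supported_on_def by metis
  next
    case uv: True
    show ?thesis
    proof (cases "u = v")
      case False
      have "C1 u u * C1 v v + C1 u v \<noteq> 0 \<longleftrightarrow> C1 u u * C1 v v + C2 u v \<noteq> 0"
        using det[of "{u,v}"] uv diag[of u] diag[of v]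
        unfolding det_sub_doubleton_symmetric[OF sym1 False] det_sub_doubleton_symmetric[OF sym2 False]
        by simp
      thus ?thesis
        using bit_cases[of "C1 u u * C1 v v"] bit_cases[of "C1 u v"] bit_cases[of "C2 u v"] by auto
    qed (use diag uv in simp)
  qed
qed

lemma inter_mat_eq:
  assumes "symmetric_mat C" "mat_supported_on E C" "F = dm_of_mat E C"
  shows "inter_mat E F = C"
  unfolding inter_mat_def
proof (rule the_equality)
  show "symmetric_mat C \<and> (\<forall>u v. C u v \<noteq> 0 \<longrightarrow> u \<in> E \<and> v \<in> E) \<and> F = dm_of_mat E C"
    using assms unfolding mat_supported_on_def by blast
next
  fix C' assume C': "symmetric_mat C' \<and> (\<forall>u v. C' u v \<noteq> 0 \<longrightarrow> u \<in> E \<and> v \<in> E) \<and> F = dm_of_mat E C'"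
  show "C' = C"
  proof (rule dm_of_mat_inject[where E = E])
    show "symmetric_mat C'" "mat_supported_on E C'" "dm_of_mat E C' = dm_of_mat E C"
      using C' assms(3) unfolding mat_supported_on_def by auto
  qed (use assms in auto)
qed

section \<open>Twists of width zero\<close>

lemma coeff_0_twist_poly_neq_0_iff:
  assumes "finite E"
  shows "coeff (twist_poly E F) 0 \<noteq> 0 \<longleftrightarrow> (\<exists>A\<subseteq>E. width (twist F A) = 0)"
proof -
  have "coeff (twist_poly E F) 0 = (\<Sum>A\<in>Pow E. if width (twist F A) = 0 then 1 else 0)"
    unfolding twist_poly_def coeff_sum coeff_monom by (intro sum.cong) auto
  moreover have "(\<Sum>A\<in>Pow E. if width (twist F A) = 0 then 1 else 0 :: int) = 0
      \<longleftrightarrow> (\<forall>A\<in>Pow E. width (twist F A) \<noteq> 0)"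
    using assms by (subst sum_nonneg_eq_0_iff) auto
  ultimately show ?thesis by auto
qed

lemma width_eq_0_iff:
  assumes "finite W" "A \<in> W"
  shows "width W = 0 \<longleftrightarrow> (\<forall>X\<in>W. card X = card A)"
proof
  assume "\<forall>X\<in>W. card X = card A"
  hence "card ` W = (\<lambda>_. card A) ` W" by (intro image_cong) auto
  also have "\<dots> = {card A}" using assms(2) by (rule image_constant)
  finally show "width W = 0" by (simp add: width_def)
next
  assume "width W = 0"
  hence MaxMin: "Max (card ` W) \<le> Min (card ` W)" by (simp add: width_def)
  have bounds: "Min (card ` W) \<le> card X \<and> card X \<le> Max (card ` W)" if "X \<in> W" for X
    using Min_le[OF finite_imageI[OF assms(1)] imageI[OF that]]
      Max_ge[OF finite_imageI[OF assms(1)] imageI[OF that]] by blast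
  show "\<forall>X\<in>W. card X = card A"
  proof
    fix X assume "X \<in> W"
    show "card X = card A"
      using bounds[OF \<open>X \<in> W\<close>] bounds[OF assms(2)] MaxMin by linarith
  qed
qed

lemma width_twist_eq_0_iff:
  assumes "finite F" "{} \<in> F"
  shows "width (twist F A) = 0 \<longleftrightarrow> (\<forall>X\<in>F. card (symdiff A X) = card A)"
proof -
  have "symdiff A {} = A" by (simp add: symdiff_def)
  hence "A \<in> twist F A" using assms(2) unfolding twist_def by (metis image_eqI)
  moreover have "finite (twist F A)" using assms(1) by (simp add: twist_def)
  ultimately show ?thesis by (simp add: width_eq_0_iff twist_def)
qed

lemma card_symdiff_eq_iff:
  assumes "finite A" "finite X"
  shows "card (symdiff A X) = card A \<longleftrightarrow> card X = 2 * card (A \<inter> X)"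
proof -
  have "card (symdiff A X) = card (A - X) + card (X - A)"
    unfolding symdiff_def using assms by (intro card_Un_disjoint) auto
  moreover have "card A = card (A \<inter> X) + card (A - X)"
    using card_Int_Diff[OF assms(1), of X] .
  moreover have "card X = card (A \<inter> X) + card (X - A)"
    using card_Int_Diff[OF assms(2), of A] by (simp only: Int_commute[of X A])
  ultimately show ?thesis by linarith
qed

lemma bipartition_if_card_symdiff_eq:
  assumes fin: "finite A" and sym: "symmetric_mat C"
    and eq: "\<And>X. X \<in> dm_of_mat E C \<Longrightarrow> card (symdiff A X) = card A"
    and "u \<in> E" "v \<in> E" "C u v = 1"
  shows "u \<in> A \<longleftrightarrow> v \<notin> A"
proof -
  have even: "card X = 2 * card (A \<inter> X)" if "X \<subseteq> E" "det_sub C X \<noteq> 0" "finite X" for X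
    using eq[of X] that card_symdiff_eq_iff[OF fin] unfolding dm_of_mat_def by blast
  have no_loop: "C w w = 0" if "w \<in> E" for w
  proof (rule ccontr)
    assume "C w w \<noteq> 0"
    hence "(1::nat) = 2 * card (A \<inter> {w})" using even[of "{w}"] that by simp
    thus False by presburger
  qed
  hence "u \<noteq> v" using \<open>u \<in> E\<close> \<open>C u v = 1\<close> by auto
  have "det_sub C {u,v} = 1"
    using no_loop \<open>u \<in> E\<close> \<open>v \<in> E\<close> \<open>C u v = 1\<close>
    by (simp add: det_sub_doubleton_symmetric[OF sym \<open>u \<noteq> v\<close>])
  hence "card (A \<inter> {u,v}) = 1" using even[of "{u,v}"] \<open>u \<in> E\<close> \<open>v \<in> E\<close> \<open>u \<noteq> v\<close> by simp
  thus ?thesis using \<open>u \<noteq> v\<close> by (cases "u \<in> A"; cases "v \<in> A") (auto simp: Int_insert_right)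
qed

lemma card_symdiff_eq_if_bipartition:
  assumes fin: "finite X"
    and bip: "\<And>u v. u \<in> E \<Longrightarrow> v \<in> E \<Longrightarrow> C u v = 1 \<Longrightarrow> u \<in> X \<longleftrightarrow> v \<notin> X"
    and Y: "Y \<in> dm_of_mat E C" and finY: "finite Y"
  shows "card (symdiff X Y) = card X"
proof -
  have YE: "Y \<subseteq> E" and "det_sub C Y \<noteq> 0" using Y unfolding dm_of_mat_def by auto
  hence "card (Y \<inter> X) = card (Y - X)"
    by (intro card_Int_eq_card_Diff_if_det_sub_neq_0[OF finY]) (use bip YE in auto)
  thus ?thesis
    using card_symdiff_eq_iff[OF fin finY] card_Int_Diff[OF finY, of X] by (simp add: Int_commute)
qed

lemma ex_card_symdiff_eq_iff_bipartite:
  assumes fin: "finite E" and sym: "symmetric_mat C"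
  shows "(\<exists>A\<subseteq>E. \<forall>X\<in>dm_of_mat E C. card (symdiff A X) = card A)
    \<longleftrightarrow> bipartite E (\<lambda>u v. u \<in> E \<and> v \<in> E \<and> C u v = 1)"
proof
  assume "\<exists>A\<subseteq>E. \<forall>X\<in>dm_of_mat E C. card (symdiff A X) = card A"
  then obtain A where A: "A \<subseteq> E"
    and eq: "\<And>X. X \<in> dm_of_mat E C \<Longrightarrow> card (symdiff A X) = card A" by blast
  have "u \<in> A \<longleftrightarrow> v \<notin> A" if "u \<in> E" "v \<in> E" "C u v = 1" for u v
    by (rule bipartition_if_card_symdiff_eq[OF finite_subset[OF A fin] sym eq that])
  thus "bipartite E (\<lambda>u v. u \<in> E \<and> v \<in> E \<and> C u v = 1)" unfolding bipartite_def using A by blast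
next
  assume "bipartite E (\<lambda>u v. u \<in> E \<and> v \<in> E \<and> C u v = 1)"
  then obtain X where X: "X \<subseteq> E"
    and bip: "\<And>u v. u \<in> E \<Longrightarrow> v \<in> E \<Longrightarrow> C u v = 1 \<Longrightarrow> u \<in> X \<longleftrightarrow> v \<notin> X"
    unfolding bipartite_def by blast
  have "card (symdiff X Y) = card X" if Y: "Y \<in> dm_of_mat E C" for Y
  proof (rule card_symdiff_eq_if_bipartition[OF finite_subset[OF X fin] bip Y])
    show "finite Y" using Y fin unfolding dm_of_mat_def by (blast intro: finite_subset)
  qed
  thus "\<exists>A\<subseteq>E. \<forall>X\<in>dm_of_mat E C. card (symdiff A X) = card A" using X by blast
qed

theorem mainTheorem8:
  fixes E :: "'a set" and F :: "'a set set"
  assumes "delta_matroid E F" and "normal F" and "binary E F"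
  shows "coeff (twist_poly E F) 0 \<noteq> 0 \<longleftrightarrow> bipartite E (inter_graph_adj E F)"
proof -
  have fin: "finite E" and sub: "\<And>X. X \<in> F \<Longrightarrow> X \<subseteq> E"
    using assms(1) unfolding delta_matroid_def by auto
  have finF: "finite F" using fin sub by (meson finite_Pow_iff finite_subset subsetI PowI)
  obtain C where sym: "symmetric_mat C" and supp: "mat_supported_on E C" and F: "F = dm_of_mat E C"
    using normal_binary_eq_dm_of_mat[OF assms] .
  have adj: "inter_graph_adj E F = (\<lambda>u v. u \<in> E \<and> v \<in> E \<and> C u v = 1)"
    using inter_mat_eq[OF sym supp F] unfolding inter_graph_adj_def by (intro ext) simp
  have "coeff (twist_poly E F) 0 \<noteq> 0 \<longleftrightarrow> (\<exists>A\<subseteq>E. \<forall>X\<in>F. card (symdiff A X) = card A)"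
    using coeff_0_twist_poly_neq_0_iff[OF fin] width_twist_eq_0_iff[OF finF] assms(2)
    unfolding normal_def by simp
  also have "\<dots> \<longleftrightarrow> bipartite E (inter_graph_adj E F)"
    unfolding adj using ex_card_symdiff_eq_iff_bipartite[OF fin sym] F by simp
  finally show ?thesis .
qed

end
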